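(* Let $U_1,\dots,U_d$ be left-orthogonal TT cores with left interface matrices $X_{\le k}$, and let $\delta V_1,\dots,\delta V_d$ be cores of the same sizes satisfying $(\delta V_k^L)^\top U_k^L=0$ for all $k\in[d-1]$, with variational interface matrices $V_{\le k}$. Then $V_{\le k}^\top X_{\le k}=0$ for all $k\in[d-1]$.
   Context: Fix $d\ge2$, positive integers $n_1,\dots,n_d$, $r_0=r_d=1$, $r_1,\dots,r_{d-1}\ge1$. Cores $U_k,\delta V_k\in\mathbb R^{r_{k-1}\times n_k\times r_k}$. For $U\in\mathbb R^{a\times n\times b}$, $U^L\in\mathbb R^{an\times b}$ has entry $U(\alpha,i,\beta)$ at row $\alpha+(i-1)a$, column $\beta$. Left-orthogonal: $(U_k^L)^\top U_k^L=I_{r_k}$ for $k\in[d-1]$. Interface matrices: $X_{\le0}=1$, $X_{\le k}=(I_{n_k}\otimes X_{\le k-1})U_k^L$. Variational interface matrices: $V_{\le0}=0$, $V_{\le k}=(I_{n_k}\otimes V_{\le k-1})U_k^L+(I_{n_k}\otimes X_{\le k-1})\delta V_k^L$. *)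

theory Defs
  imports "Jordan_Normal_Form.Matrix"
begin

text \<open>Conventions: indices are 0-based. A TT core of size a x n x b is a function
  C :: nat => nat => nat => real, with C alpha i beta meaningful for alpha < a, i < n, beta < b.
  The family of cores is indexed by k = 1..d; ranks r :: nat => nat, mode sizes n :: nat => nat.\<close>

type_synonym core = "nat \<Rightarrow> nat \<Rightarrow> nat \<Rightarrow> real"

definition unfold_L :: "nat \<Rightarrow> nat \<Rightarrow> nat \<Rightarrow> core \<Rightarrow> real mat" where
  "unfold_L a n b C = mat (a * n) b (\<lambda>(row, col). C (row mod a) (row div a) col)"

definition kron :: "real mat \<Rightarrow> real mat \<Rightarrow> real mat" where
  "kron A B = mat (dim_row A * dim_row B) (dim_col A * dim_col B)
     (\<lambda>(i, j). A $$ (i div dim_row B, j div dim_col B) * B $$ (i mod dim_row B, j mod dim_col B))"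

definition coreL :: "(nat \<Rightarrow> nat) \<Rightarrow> (nat \<Rightarrow> nat) \<Rightarrow> (nat \<Rightarrow> core) \<Rightarrow> nat \<Rightarrow> real mat" where
  "coreL n r U k = unfold_L (r (k - 1)) (n k) (r k) (U k)"

fun X_le :: "(nat \<Rightarrow> nat) \<Rightarrow> (nat \<Rightarrow> nat) \<Rightarrow> (nat \<Rightarrow> core) \<Rightarrow> nat \<Rightarrow> real mat" where
  "X_le n r U 0 = 1\<^sub>m 1"
| "X_le n r U (Suc k) = kron (1\<^sub>m (n (Suc k))) (X_le n r U k) * coreL n r U (Suc k)"

fun V_le :: "(nat \<Rightarrow> nat) \<Rightarrow> (nat \<Rightarrow> nat) \<Rightarrow> (nat \<Rightarrow> core) \<Rightarrow> (nat \<Rightarrow> core) \<Rightarrow> nat \<Rightarrow> real mat" where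
  "V_le n r U dV 0 = 0\<^sub>m 1 1"
| "V_le n r U dV (Suc k) =
     kron (1\<^sub>m (n (Suc k))) (V_le n r U dV k) * coreL n r U (Suc k)
   + kron (1\<^sub>m (n (Suc k))) (X_le n r U k) * coreL n r dV (Suc k)"

end

theory Submission
  imports Defs
begin

text \<open>Left-orthogonality of the cores propagates to the interfaces,
  \<open>X\<^sub>\<le>\<^sub>k\<^sup>T X\<^sub>\<le>\<^sub>k = I\<close>, and this drives a second induction on \<open>k\<close>.
  Writing \<open>K = I \<otimes> X\<^sub>\<le>\<^sub>k\<^sub>-\<^sub>1\<close>, the mixed-product rule
  \<open>(I \<otimes> A)\<^sup>T (I \<otimes> B) = I \<otimes> A\<^sup>T B\<close> turns \<open>K\<^sup>T K\<close> into the identity and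
  \<open>(I \<otimes> V\<^sub>\<le>\<^sub>k\<^sub>-\<^sub>1)\<^sup>T K\<close> into zero, so
  \<open>V\<^sub>\<le>\<^sub>k\<^sup>T X\<^sub>\<le>\<^sub>k = (U\<^sub>k\<^sup>L)\<^sup>T 0 U\<^sub>k\<^sup>L + (\<delta>V\<^sub>k\<^sup>L)\<^sup>T U\<^sub>k\<^sup>L = 0\<close>.\<close>

lemma sum_lessThan_mult_split:
  fixes g :: "nat \<Rightarrow> 'a::comm_monoid_add"
  shows "(\<Sum>l<N * m. g l) = (\<Sum>c<N. \<Sum>t<m. g (c * m + t))"
  by (simp add: sum.nat_group[symmetric] sum.atLeastLessThan_shift_0 atLeast0LessThan comp_def)

lemma kron_one_carrier_mat: "A \<in> carrier_mat m p \<Longrightarrow> kron (1\<^sub>m N) A \<in> carrier_mat (N * m) (N * p)"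
  by (simp add: kron_def)

lemma index_kron_one:
  assumes "A \<in> carrier_mat m p" and "l < N * m" and "i < N * p"
  shows "kron (1\<^sub>m N) A $$ (l, i) = (if l div m = i div p then A $$ (l mod m, i mod p) else 0)"
proof -
  have "l div m < N" "i div p < N"
    using assms(2,3) by (simp_all add: less_mult_imp_div_less mult.commute)
  then show ?thesis
    using assms by (simp add: kron_def)
qed

lemma transpose_kron_one_mult:
  assumes A: "A \<in> carrier_mat m p" and B: "B \<in> carrier_mat m q"
  shows "transpose_mat (kron (1\<^sub>m N) A) * kron (1\<^sub>m N) B = kron (1\<^sub>m N) (transpose_mat A * B)"
proof (rule eq_matI)
  fix i j
  assume "i < dim_row (kron (1\<^sub>m N) (transpose_mat A * B))"
    and "j < dim_col (kron (1\<^sub>m N) (transpose_mat A * B))"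
  with A B have i: "i < N * p" and j: "j < N * q"
    by (simp_all add: kron_def)
  then have "0 < p" and "0 < q"
    by (auto intro!: gr0I)
  have AtB: "transpose_mat A * B \<in> carrier_mat p q"
    using A B by simp
  have "(transpose_mat (kron (1\<^sub>m N) A) * kron (1\<^sub>m N) B) $$ (i, j)
      = (\<Sum>l<N * m. kron (1\<^sub>m N) A $$ (l, i) * kron (1\<^sub>m N) B $$ (l, j))"
    using A B i j by (simp add: kron_def scalar_prod_def lessThan_atLeast0)
  also have "\<dots> = (\<Sum>c<N. \<Sum>t<m. kron (1\<^sub>m N) A $$ (c * m + t, i) * kron (1\<^sub>m N) B $$ (c * m + t, j))"
    by (rule sum_lessThan_mult_split)
  also have "\<dots> = (\<Sum>c<N. \<Sum>t<m.
      (if c = i div p then A $$ (t, i mod p) else 0) * (if c = j div q then B $$ (t, j mod q) else 0))"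
  proof (intro sum.cong refl)
    fix c t
    assume c: "c \<in> {..<N}" and t: "t \<in> {..<m}"
    then have "c * m + t < Suc c * m"
      by simp
    also have "\<dots> \<le> N * m"
      using c mult_le_mono1[of "Suc c" N m] by simp
    finally show "kron (1\<^sub>m N) A $$ (c * m + t, i) * kron (1\<^sub>m N) B $$ (c * m + t, j)
        = (if c = i div p then A $$ (t, i mod p) else 0) * (if c = j div q then B $$ (t, j mod q) else 0)"
      using t i j by (simp add: index_kron_one[OF A] index_kron_one[OF B])
  qed
  also have "\<dots> = (\<Sum>c<N. if c = i div p then
      (if i div p = j div q then (\<Sum>t<m. A $$ (t, i mod p) * B $$ (t, j mod q)) else 0) else 0)"
    by (intro sum.cong refl) auto
  also have "\<dots> = (if i div p = j div q then (\<Sum>t<m. A $$ (t, i mod p) * B $$ (t, j mod q)) else 0)"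
    using i by (simp add: less_mult_imp_div_less mult.commute)
  also have "\<dots> = kron (1\<^sub>m N) (transpose_mat A * B) $$ (i, j)"
    using A B i j \<open>0 < p\<close> \<open>0 < q\<close> by (simp add: index_kron_one[OF AtB] scalar_prod_def lessThan_atLeast0)
  finally show "(transpose_mat (kron (1\<^sub>m N) A) * kron (1\<^sub>m N) B) $$ (i, j)
      = kron (1\<^sub>m N) (transpose_mat A * B) $$ (i, j)" .
qed (use A B in \<open>simp_all add: kron_def\<close>)

lemma kron_one_zero: "kron (1\<^sub>m N) (0\<^sub>m m p) = 0\<^sub>m (N * m) (N * p)"
proof (rule eq_matI)
  fix i j
  assume "i < dim_row (0\<^sub>m (N * m) (N * p) :: real mat)" and "j < dim_col (0\<^sub>m (N * m) (N * p) :: real mat)"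
  then have "i < N * m" and "j < N * p"
    by simp_all
  moreover from this have "0 < m" and "0 < p"
    by (auto intro!: gr0I)
  ultimately show "kron (1\<^sub>m N) (0\<^sub>m m p) $$ (i, j) = 0\<^sub>m (N * m) (N * p) $$ (i, j)"
    by (simp add: index_kron_one[OF zero_carrier_mat])
qed (simp_all add: kron_def)

lemma kron_one_one: "kron (1\<^sub>m N) (1\<^sub>m m) = 1\<^sub>m (N * m)"
proof (rule eq_matI)
  fix i j
  assume "i < dim_row (1\<^sub>m (N * m) :: real mat)" and "j < dim_col (1\<^sub>m (N * m) :: real mat)"
  then have "i < N * m" and "j < N * m"
    by simp_all
  moreover from this have "0 < m"
    by (auto intro!: gr0I)
  moreover have "(i div m = j div m \<and> i mod m = j mod m) = (i = j)"
    by (metis div_mod_decomp)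
  ultimately show "kron (1\<^sub>m N) (1\<^sub>m m) $$ (i, j) = 1\<^sub>m (N * m) $$ (i, j)"
    by (auto simp: index_kron_one[OF one_carrier_mat])
qed (simp_all add: kron_def)

lemma transpose_mult_mult_mat:
  fixes A B A' B' :: "'a::comm_semiring_1 mat"
  assumes A: "A \<in> carrier_mat m p" and B: "B \<in> carrier_mat p q"
    and A': "A' \<in> carrier_mat m p'" and B': "B' \<in> carrier_mat p' q'"
  shows "transpose_mat (A * B) * (A' * B') = transpose_mat B * (transpose_mat A * A') * B'"
proof -
  have At: "transpose_mat A \<in> carrier_mat p m" and Bt: "transpose_mat B \<in> carrier_mat q p"
    using A B by simp_all
  have "transpose_mat (A * B) * (A' * B') = transpose_mat B * transpose_mat A * (A' * B')"
    by (simp add: transpose_mult[OF A B])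
  also have "\<dots> = transpose_mat B * (transpose_mat A * (A' * B'))"
    using assoc_mult_mat[OF Bt At, of "A' * B'" q'] A' B' by simp
  also have "transpose_mat A * (A' * B') = transpose_mat A * A' * B'"
    using assoc_mult_mat[OF At A' B'] by simp
  also have "transpose_mat B * (transpose_mat A * A' * B') = transpose_mat B * (transpose_mat A * A') * B'"
    using assoc_mult_mat[OF Bt _ B', of "transpose_mat A * A'"] At A' by simp
  finally show ?thesis .
qed

lemma coreL_Suc_carrier_mat: "coreL n r U (Suc k) \<in> carrier_mat (n (Suc k) * r k) (r (Suc k))"
  by (simp add: coreL_def unfold_L_def mult.commute)

lemma X_le_carrier_mat:
  assumes "r 0 = 1"
  shows "X_le n r U k \<in> carrier_mat (\<Prod>i\<in>{1..k}. n i) (r k)"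
proof (induction k)
  case 0
  then show ?case
    using assms by simp
next
  case (Suc k)
  show ?case
    using mult_carrier_mat[OF kron_one_carrier_mat[OF Suc] coreL_Suc_carrier_mat[of n r U k]]
    by (simp add: mult.commute)
qed

lemma V_le_carrier_mat:
  assumes "r 0 = 1"
  shows "V_le n r U dV k \<in> carrier_mat (\<Prod>i\<in>{1..k}. n i) (r k)"
proof (induction k)
  case 0
  then show ?case
    using assms by simp
next
  case (Suc k)
  show ?case
    using mult_carrier_mat[OF kron_one_carrier_mat[OF Suc] coreL_Suc_carrier_mat[of n r U k]]
      mult_carrier_mat[OF kron_one_carrier_mat[OF X_le_carrier_mat[where r = r, OF assms]]
        coreL_Suc_carrier_mat[of n r dV k]]
    by (simp add: mult.commute)
qed

lemma transpose_X_le_mult_X_le: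
  assumes r0: "r 0 = 1"
    and orthU: "\<And>j. 1 \<le> j \<Longrightarrow> j \<le> k \<Longrightarrow> transpose_mat (coreL n r U j) * coreL n r U j = 1\<^sub>m (r j)"
  shows "transpose_mat (X_le n r U k) * X_le n r U k = 1\<^sub>m (r k)"
  using orthU
proof (induction k)
  case 0
  then show ?case
    using r0 by simp
next
  case (Suc k)
  let ?X = "X_le n r U k" and ?C = "coreL n r U (Suc k)"
  define K where "K = kron (1\<^sub>m (n (Suc k))) ?X"
  have X: "?X \<in> carrier_mat (\<Prod>i\<in>{1..k}. n i) (r k)"
    by (rule X_le_carrier_mat[where r = r, OF r0])
  have K: "K \<in> carrier_mat (n (Suc k) * (\<Prod>i\<in>{1..k}. n i)) (n (Suc k) * r k)"
    unfolding K_def by (rule kron_one_carrier_mat[OF X])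
  have C: "?C \<in> carrier_mat (n (Suc k) * r k) (r (Suc k))"
    by (rule coreL_Suc_carrier_mat)
  have KtK: "transpose_mat K * K = 1\<^sub>m (n (Suc k) * r k)"
    using Suc by (simp add: K_def transpose_kron_one_mult[OF X X] kron_one_one)
  have "transpose_mat (X_le n r U (Suc k)) * X_le n r U (Suc k) = transpose_mat ?C * (transpose_mat K * K) * ?C"
    using transpose_mult_mult_mat[OF K C K C] by (simp add: K_def)
  also have "\<dots> = 1\<^sub>m (r (Suc k))"
    using C Suc.prems[of "Suc k"] by (simp add: KtK)
  finally show ?case .
qed

lemma transpose_V_le_mult_X_le:
  assumes r0: "r 0 = 1"
    and orthU: "\<And>j. 1 \<le> j \<Longrightarrow> j \<le> k \<Longrightarrow> transpose_mat (coreL n r U j) * coreL n r U j = 1\<^sub>m (r j)"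
    and orthdV: "\<And>j. 1 \<le> j \<Longrightarrow> j \<le> k \<Longrightarrow> transpose_mat (coreL n r dV j) * coreL n r U j = 0\<^sub>m (r j) (r j)"
  shows "transpose_mat (V_le n r U dV k) * X_le n r U k = 0\<^sub>m (r k) (r k)"
  using orthU orthdV
proof (induction k)
  case 0
  then show ?case
    using r0 by simp
next
  case (Suc k)
  let ?X = "X_le n r U k" and ?V = "V_le n r U dV k"
  let ?C = "coreL n r U (Suc k)" and ?D = "coreL n r dV (Suc k)"
  define K where "K = kron (1\<^sub>m (n (Suc k))) ?X"
  define KV where "KV = kron (1\<^sub>m (n (Suc k))) ?V"
  let ?M = "n (Suc k) * (\<Prod>i\<in>{1..k}. n i)"
  have X: "?X \<in> carrier_mat (\<Prod>i\<in>{1..k}. n i) (r k)"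
    by (rule X_le_carrier_mat[where r = r, OF r0])
  have V: "?V \<in> carrier_mat (\<Prod>i\<in>{1..k}. n i) (r k)"
    by (rule V_le_carrier_mat[where r = r, OF r0])
  have K: "K \<in> carrier_mat ?M (n (Suc k) * r k)"
    unfolding K_def by (rule kron_one_carrier_mat[OF X])
  have KV: "KV \<in> carrier_mat ?M (n (Suc k) * r k)"
    unfolding KV_def by (rule kron_one_carrier_mat[OF V])
  have C: "?C \<in> carrier_mat (n (Suc k) * r k) (r (Suc k))"
    by (rule coreL_Suc_carrier_mat)
  have D: "?D \<in> carrier_mat (n (Suc k) * r k) (r (Suc k))"
    by (rule coreL_Suc_carrier_mat)
  have KtK: "transpose_mat K * K = 1\<^sub>m (n (Suc k) * r k)"
    using transpose_X_le_mult_X_le[where r = r and n = n and U = U and k = k, OF r0] Suc.prems(1)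
    by (simp add: K_def transpose_kron_one_mult[OF X X] kron_one_one)
  have KVtK: "transpose_mat KV * K = 0\<^sub>m (n (Suc k) * r k) (n (Suc k) * r k)"
    using Suc by (simp add: K_def KV_def transpose_kron_one_mult[OF V X] kron_one_zero)
  have KC: "K * ?C \<in> carrier_mat ?M (r (Suc k))"
    and KVC: "KV * ?C \<in> carrier_mat ?M (r (Suc k))"
    and KD: "K * ?D \<in> carrier_mat ?M (r (Suc k))"
    using K KV C D by simp_all
  have "X_le n r U (Suc k) = K * ?C" and "V_le n r U dV (Suc k) = KV * ?C + K * ?D"
    by (simp_all add: K_def KV_def)
  then have "transpose_mat (V_le n r U dV (Suc k)) * X_le n r U (Suc k)
      = (transpose_mat (KV * ?C) + transpose_mat (K * ?D)) * (K * ?C)"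
    by (simp add: transpose_add[OF KVC KD])
  also have "\<dots> = transpose_mat (KV * ?C) * (K * ?C) + transpose_mat (K * ?D) * (K * ?C)"
    using add_mult_distrib_mat[of "transpose_mat (KV * ?C)" "r (Suc k)" ?M] KVC KD KC by simp
  also have "\<dots> = transpose_mat ?C * (transpose_mat KV * K) * ?C + transpose_mat ?D * (transpose_mat K * K) * ?C"
    by (simp add: transpose_mult_mult_mat[OF KV C K C] transpose_mult_mult_mat[OF K D K C])
  also have "\<dots> = 0\<^sub>m (r (Suc k)) (r (Suc k))"
    using C D Suc.prems(2)[of "Suc k"] by (simp add: KVtK KtK)
  finally show ?case .
qed

theorem lemma18:
  fixes d :: nat and n r :: "nat \<Rightarrow> nat" and U dV :: "nat \<Rightarrow> core"
  assumes "d \<ge> 2"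
    and "\<And>k. 1 \<le> k \<Longrightarrow> k \<le> d \<Longrightarrow> n k \<ge> 1"
    and "r 0 = 1" and "r d = 1"
    and "\<And>k. 1 \<le> k \<Longrightarrow> k \<le> d - 1 \<Longrightarrow> r k \<ge> 1"
    and "\<And>k. 1 \<le> k \<Longrightarrow> k \<le> d - 1 \<Longrightarrow>
           transpose_mat (coreL n r U k) * coreL n r U k = 1\<^sub>m (r k)"
    and "\<And>k. 1 \<le> k \<Longrightarrow> k \<le> d - 1 \<Longrightarrow>
           transpose_mat (coreL n r dV k) * coreL n r U k = 0\<^sub>m (r k) (r k)"
  shows "\<forall>k. 1 \<le> k \<and> k \<le> d - 1 \<longrightarrow>
           transpose_mat (V_le n r U dV k) * X_le n r U k = 0\<^sub>m (r k) (r k)"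
proof (intro allI impI)
  fix k
  assume "1 \<le> k \<and> k \<le> d - 1"
  then show "transpose_mat (V_le n r U dV k) * X_le n r U k = 0\<^sub>m (r k) (r k)"
    using assms(3,6,7) by (intro transpose_V_le_mult_X_le) auto
qed

end
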